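(* Let $X$ be a real random variable with $\mathbb E[X]=0$ and $\mathbb E[X^2]=1$, and let $\mathrm{mmse}$ and $G$ be as defined in the context. Then $G$ is non-increasing on $(0,\infty)$ (on $(0,1]$ it has nonpositive derivative wherever differentiable, and it is constant equal to $1$ on $[1,\infty)$). Consequently, for every $\lambda>0$ the mercury level $\mathcal H(W)=\frac1\lambda G\!\big(\frac{1}{W\lambda}\big)$ is a non-decreasing function of $W\in(0,\infty)$.
   Context: For $\gamma\ge0$, $\mathrm{mmse}(\gamma)=\mathbb E\big[(X-\mathbb E[X\mid \sqrt\gamma X+Z])^2\big]$ with $Z\sim\mathcal N(0,1)$ independent of $X$; $\mathrm{mmse}$ is a continuous strictly decreasing bijection from $[0,\infty)$ onto $(0,1]$, and $\mathrm{mmse}^{-1}:(0,1]\to[0,\infty)$ denotes its inverse. The mercury factor is $G(\psi)=\frac1\psi-\mathrm{mmse}^{-1}(\psi)$ for $\psi\in(0,1]$ and $G(\psi)=1$ for $\psi\ge1$. *)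

theory Defs
  imports "HOL-Probability.Probability"
begin

definition mmse :: "'a measure \<Rightarrow> ('a \<Rightarrow> real) \<Rightarrow> ('a \<Rightarrow> real) \<Rightarrow> real \<Rightarrow> real" where
  "mmse M X Z \<gamma> =
     (let Y = (\<lambda>\<omega>. sqrt \<gamma> * X \<omega> + Z \<omega>);
          F = vimage_algebra (space M) Y borel
      in integral\<^sup>L M (\<lambda>\<omega>. (X \<omega> - real_cond_exp M F X \<omega>)\<^sup>2))"

definition mmse_inv :: "'a measure \<Rightarrow> ('a \<Rightarrow> real) \<Rightarrow> ('a \<Rightarrow> real) \<Rightarrow> real \<Rightarrow> real" where
  "mmse_inv M X Z = the_inv_into {0..} (mmse M X Z)"

text \<open>Mercury factor G (only meaningful for psi > 0).\<close>
definition mercury_G :: "'a measure \<Rightarrow> ('a \<Rightarrow> real) \<Rightarrow> ('a \<Rightarrow> real) \<Rightarrow> real \<Rightarrow> real" where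
  "mercury_G M X Z \<psi> = (if \<psi> \<ge> 1 then 1 else 1 / \<psi> - mmse_inv M X Z \<psi>)"

end

theory Submission
  imports Defs
begin

text \<open>The heart of the matter is the inequality
  1 / mmse(gamma') - 1 / mmse(gamma) \<ge> gamma' - gamma  for  0 \<le> gamma < gamma'.
  Given the optimal estimator g at SNR gamma, rotate the noise of the observation at SNR gamma'
  together with an auxiliary independent Gaussian: this produces independent observations of X
  at SNRs gamma and gamma' - gamma. Combining g on the first with the best linear correction from
  the second shows mmse(gamma') \<le> m / (1 + (gamma' - gamma) m) with m = mmse(gamma).
  Writing psi_i = mmse(gamma_i), the inequality says exactly that
  G(psi) = 1/psi - mmse\<inverse>(psi) does not increase; the mercury level inherits this
  since 1/(W lambda) decreases in W.\<close>

lemma borel_measurable_vimage_algebra_factor: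
  fixes h Y :: "'a \<Rightarrow> real"
  assumes h: "h \<in> borel_measurable (vimage_algebra \<Omega> Y borel)"
  obtains g where "g \<in> borel_measurable borel" "\<And>\<omega>. \<omega> \<in> \<Omega> \<Longrightarrow> h \<omega> = g (Y \<omega>)"
proof -
  have sets_eq: "sets (vimage_algebra \<Omega> Y borel) = {Y -` A \<inter> \<Omega> | A. A \<in> sets borel}"
    by (rule sets_vimage_algebra2) auto
  have "\<exists>A. A \<in> sets borel \<and> Y -` A \<inter> \<Omega> = {\<omega>\<in>\<Omega>. h \<omega> \<le> real_of_rat q}" for q
  proof -
    have "{\<omega>\<in>space (vimage_algebra \<Omega> Y borel). h \<omega> \<le> real_of_rat q} \<in> sets (vimage_algebra \<Omega> Y borel)"
      using h by measurable
    then show ?thesis unfolding sets_eq by auto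
  qed
  then obtain A where A: "\<And>q. A q \<in> sets borel"
      and A_eq: "\<And>q. Y -` A q \<inter> \<Omega> = {\<omega>\<in>\<Omega>. h \<omega> \<le> real_of_rat q}"
    by metis
  \<comment> \<open>h is recovered from its rational sublevel sets as the infimum of the rationals above it\<close>
  define I where "I y = (INF q. if y \<in> A q then ereal (real_of_rat q) else \<infinity>)" for y
  have "(\<lambda>y. real_of_ereal (I y)) \<in> borel_measurable borel"
    unfolding I_def using A by measurable
  moreover have "h \<omega> = real_of_ereal (I (Y \<omega>))" if \<omega>: "\<omega> \<in> \<Omega>" for \<omega>
  proof -
    have mem: "Y \<omega> \<in> A q \<longleftrightarrow> h \<omega> \<le> real_of_rat q" for q
      using A_eq[of q] \<omega> by blast
    have "I (Y \<omega>) = ereal (h \<omega>)"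
    proof (rule antisym)
      show "ereal (h \<omega>) \<le> I (Y \<omega>)"
        unfolding I_def by (rule INF_greatest) (auto simp: mem)
      show "I (Y \<omega>) \<le> ereal (h \<omega>)"
      proof (rule ereal_le_epsilon2)
        fix e :: real assume "0 < e"
        then obtain q where q: "h \<omega> < real_of_rat q" "real_of_rat q < h \<omega> + e"
          using Rats_dense_in_real[of "h \<omega>" "h \<omega> + e"] by (auto simp: Rats_def)
        then have "I (Y \<omega>) \<le> ereal (real_of_rat q)"
          unfolding I_def using mem[of q] by (intro INF_lower2[of q]) auto
        also have "\<dots> \<le> ereal (h \<omega>) + ereal e" using q by simp
        finally show "I (Y \<omega>) \<le> ereal (h \<omega>) + ereal e" .
      qed
    qed
    then show ?thesis by simp
  qed
  ultimately show ?thesis using that by blast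
qed

lemma integrable_mult_of_square_integrable:
  fixes f g :: "'a \<Rightarrow> real"
  assumes "integrable M (\<lambda>x. (f x)\<^sup>2)" "integrable M (\<lambda>x. (g x)\<^sup>2)"
    and "f \<in> borel_measurable M" "g \<in> borel_measurable M"
  shows "integrable M (\<lambda>x. f x * g x)"
proof (rule Bochner_Integration.integrable_bound[where f="\<lambda>x. (f x)\<^sup>2 + (g x)\<^sup>2"])
  have "\<bar>a * b\<bar> \<le> a\<^sup>2 + b\<^sup>2" for a b :: real
  proof -
    have "2 * (\<bar>a\<bar> * \<bar>b\<bar>) \<le> a\<^sup>2 + b\<^sup>2"
      using sum_squares_bound[of "\<bar>a\<bar>" "\<bar>b\<bar>"] by (simp add: mult.assoc)
    moreover have "0 \<le> \<bar>a\<bar> * \<bar>b\<bar>" by simp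
    ultimately show ?thesis unfolding abs_mult by linarith
  qed
  then show "AE x in M. norm (f x * g x) \<le> norm ((f x)\<^sup>2 + (g x)\<^sup>2)"
    by simp
qed (use assms in auto)

lemma integrable_square_diff:
  fixes f g :: "'a \<Rightarrow> real"
  assumes "integrable M (\<lambda>x. (f x)\<^sup>2)" "integrable M (\<lambda>x. (g x)\<^sup>2)"
    and "f \<in> borel_measurable M" "g \<in> borel_measurable M"
  shows "integrable M (\<lambda>x. (f x - g x)\<^sup>2)"
proof -
  have "integrable M (\<lambda>x. (f x)\<^sup>2 - 2 * (f x * g x) + (g x)\<^sup>2)"
    using assms integrable_mult_of_square_integrable[OF assms] by auto
  then show ?thesis by (simp add: power2_diff algebra_simps)
qed

context finite_measure_subalgebra
begin

lemma real_cond_exp_square_integrable: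
  assumes [measurable]: "X \<in> borel_measurable M" and X2: "integrable M (\<lambda>x. (X x)\<^sup>2)"
  shows "integrable M (\<lambda>x. (real_cond_exp M F X x)\<^sup>2)"
proof (rule Bochner_Integration.integrable_bound)
  show "integrable M (real_cond_exp M F (\<lambda>x. (X x)\<^sup>2))"
    using X2 by (rule real_cond_exp_int(1))
  have "convex_on UNIV (\<lambda>x::real. x\<^sup>2)"
    by (rule convex_on_realI[where f'="\<lambda>x. 2*x"]) (auto intro!: derivative_eq_intros)
  moreover have "integrable M X"
    using X2 by (rule square_integrable_imp_integrable[rotated]) simp
  ultimately have "AE x in M. (\<lambda>x. x\<^sup>2) (real_cond_exp M F X x) \<le> real_cond_exp M F (\<lambda>x. (X x)\<^sup>2) x"
    using X2 by (intro real_cond_exp_jensens_inequality(2)[where I=UNIV]) auto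
  then show "AE x in M. norm ((real_cond_exp M F X x)\<^sup>2) \<le> norm (real_cond_exp M F (\<lambda>x. (X x)\<^sup>2) x)"
    by eventually_elim auto
qed simp

lemma real_cond_exp_square_error_integrable:
  assumes "X \<in> borel_measurable M" and "integrable M (\<lambda>x. (X x)\<^sup>2)"
  shows "integrable M (\<lambda>x. (X x - real_cond_exp M F X x)\<^sup>2)"
  using assms real_cond_exp_square_integrable[OF assms]
  by (intro integrable_square_diff) (auto intro: measurable_from_subalg[OF subalg])

text \<open>Pythagoras: the error X - E[X|F] is orthogonal to every square integrable
  F-measurable function.\<close>
lemma real_cond_exp_square_error_le:
  assumes [measurable]: "X \<in> borel_measurable M" "h \<in> borel_measurable F"
    and X2: "integrable M (\<lambda>x. (X x)\<^sup>2)" and E: "integrable M (\<lambda>x. (X x - h x)\<^sup>2)"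
  shows "(\<integral>x. (X x - real_cond_exp M F X x)\<^sup>2 \<partial>M) \<le> (\<integral>x. (X x - h x)\<^sup>2 \<partial>M)"
proof -
  define c where "c = real_cond_exp M F X"
  define f where "f x = c x - h x" for x
  have [measurable]: "c \<in> borel_measurable F" "f \<in> borel_measurable F"
    unfolding f_def c_def by simp_all
  have [measurable]: "h \<in> borel_measurable M" "c \<in> borel_measurable M" "f \<in> borel_measurable M"
    by (simp_all add: measurable_from_subalg[OF subalg])
  have c2: "integrable M (\<lambda>x. (c x)\<^sup>2)"
    unfolding c_def using X2 by (simp add: real_cond_exp_square_integrable)
  have "integrable M (\<lambda>x. (h x)\<^sup>2)"
    using integrable_square_diff[OF X2 E] by simp
  then have "integrable M (\<lambda>x. (f x)\<^sup>2)"
    unfolding f_def using c2 by (intro integrable_square_diff) auto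
  then have fX: "integrable M (\<lambda>x. f x * X x)" and fc: "integrable M (\<lambda>x. f x * c x)"
    and f2: "integrable M (\<lambda>x. (f x)\<^sup>2)" and Xc2: "integrable M (\<lambda>x. (X x - c x)\<^sup>2)"
    using X2 c2 by (auto intro: integrable_mult_of_square_integrable integrable_square_diff)
  have orth: "(\<integral>x. f x * c x \<partial>M) = (\<integral>x. f x * X x \<partial>M)"
    unfolding c_def by (rule real_cond_exp_intg(2)[OF fX]) auto
  have "(X x - h x)\<^sup>2 = (X x - c x)\<^sup>2 + 2 * (f x * X x - f x * c x) + (f x)\<^sup>2" for x
    unfolding f_def by (simp add: power2_eq_square algebra_simps)
  then have "(\<integral>x. (X x - h x)\<^sup>2 \<partial>M) = (\<integral>x. (X x - c x)\<^sup>2 \<partial>M) + (\<integral>x. (f x)\<^sup>2 \<partial>M)"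
    using Xc2 fX fc f2 orth by simp
  also have "\<dots> \<ge> (\<integral>x. (X x - c x)\<^sup>2 \<partial>M)"
    by (simp add: integral_nonneg_AE)
  finally show ?thesis unfolding c_def .
qed

end

lemma (in finite_measure) finite_measure_subalgebra_vimage_algebra:
  assumes "Y \<in> measurable M N"
  shows "finite_measure_subalgebra M (vimage_algebra (space M) Y N)"
proof
  show "subalgebra M (vimage_algebra (space M) Y N)"
    unfolding subalgebra_def using sets_image_in_sets[OF refl assms] by simp
qed

lemma (in prob_space) square_diff_expectation_le_nn_integral:
  fixes f :: "'a \<Rightarrow> real"
  assumes [measurable]: "f \<in> borel_measurable M"
  shows "ennreal ((c - expectation f)\<^sup>2) \<le> (\<integral>\<^sup>+w. ennreal ((c - f w)\<^sup>2) \<partial>M)"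
proof (cases "integrable M (\<lambda>w. (c - f w)\<^sup>2)")
  case False
  then have "(\<integral>\<^sup>+w. ennreal ((c - f w)\<^sup>2) \<partial>M) = \<infinity>"
    by (simp add: integrable_iff_bounded) (metis less_top)
  then show ?thesis by simp
next
  case g2: True
  define g where "g w = c - f w" for w
  have [measurable]: "g \<in> borel_measurable M" unfolding g_def by measurable
  have g1: "integrable M g"
    using g2 unfolding g_def by (rule square_integrable_imp_integrable[rotated]) simp
  then have "integrable M f"
    using Bochner_Integration.integrable_diff[OF integrable_const[of c] g1] by (simp add: g_def)
  then have "expectation g = c - expectation f"
    unfolding g_def by (simp add: prob_space)
  moreover have "(expectation g)\<^sup>2 \<le> expectation (\<lambda>w. (g w)\<^sup>2)"
    using variance_eq[OF g1] variance_positive[of g] g2 by (simp add: g_def)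
  moreover have "ennreal (expectation (\<lambda>w. (g w)\<^sup>2)) = (\<integral>\<^sup>+w. ennreal ((g w)\<^sup>2) \<partial>M)"
    using g2 unfolding g_def by (intro nn_integral_eq_integral[symmetric]) auto
  ultimately show ?thesis
    unfolding g_def by (metis ennreal_leI)
qed

lemma square_diff_std_normal_integral_le:
  fixes f :: "real \<Rightarrow> real"
  assumes [measurable]: "f \<in> borel_measurable borel"
  shows "ennreal ((c - (\<integral>w. std_normal_density w * f w \<partial>lborel))\<^sup>2)
      \<le> (\<integral>\<^sup>+w. ennreal ((c - f w)\<^sup>2) * std_normal_density w \<partial>lborel)"
proof -
  let ?N = "density lborel (\<lambda>w. ennreal (std_normal_density w))"
  interpret N: prob_space ?N by (rule prob_space_normal_density) simp
  have "integral\<^sup>L ?N f = (\<integral>w. std_normal_density w * f w \<partial>lborel)"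
    by (subst integral_density) auto
  moreover have "(\<integral>\<^sup>+w. ennreal ((c - f w)\<^sup>2) \<partial>?N)
      = (\<integral>\<^sup>+w. ennreal ((c - f w)\<^sup>2) * std_normal_density w \<partial>lborel)"
    by (subst nn_integral_density) (auto simp: mult.commute)
  ultimately show ?thesis
    using N.square_diff_expectation_le_nn_integral[of f c] by simp
qed

lemma nn_integral_std_normal_density: "(\<integral>\<^sup>+a. ennreal (std_normal_density a) \<partial>lborel) = 1"
  by (subst nn_integral_eq_integral) auto

lemma nn_integral_std_normal_affine_square:
  fixes c k :: real
  shows "(\<integral>\<^sup>+b. ennreal ((c - k * b)\<^sup>2) * std_normal_density b \<partial>lborel) = ennreal (c\<^sup>2 + k\<^sup>2)"
proof -
  let ?p = std_normal_density
  have i1: "integrable lborel (\<lambda>b. ?p b * b)" and i2: "integrable lborel (\<lambda>b. ?p b * b\<^sup>2)"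
    using integrable_std_normal_moment[of 1] integrable_std_normal_moment[of 2] by simp_all
  have v1: "(\<integral>b. ?p b * b \<partial>lborel) = 0" and v2: "(\<integral>b. ?p b * b\<^sup>2 \<partial>lborel) = 1"
    using integral_std_normal_moment_odd[of 0] integral_std_normal_moment_even[of 1] by simp_all
  have expand: "(c - k * b)\<^sup>2 * ?p b = c\<^sup>2 * ?p b - 2 * c * k * (?p b * b) + k\<^sup>2 * (?p b * b\<^sup>2)" for b
    by (simp add: power2_eq_square algebra_simps)
  have integrable: "integrable lborel (\<lambda>b. (c - k * b)\<^sup>2 * ?p b)"
    unfolding expand using i1 i2 by auto
  have "(\<integral>\<^sup>+b. ennreal ((c - k * b)\<^sup>2) * ?p b \<partial>lborel) = (\<integral>\<^sup>+b. ennreal ((c - k * b)\<^sup>2 * ?p b) \<partial>lborel)"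
    by (simp add: ennreal_mult)
  also have "\<dots> = ennreal (\<integral>b. (c - k * b)\<^sup>2 * ?p b \<partial>lborel)"
    using integrable by (intro nn_integral_eq_integral) auto
  also have "(\<integral>b. (c - k * b)\<^sup>2 * ?p b \<partial>lborel) = c\<^sup>2 + k\<^sup>2"
    unfolding expand using i1 i2 v1 v2 by simp
  finally show ?thesis .
qed

lemma std_normal_density_rotation_swap:
  fixes t u a z :: real
  assumes tu: "t\<^sup>2 + u\<^sup>2 = 1" and u: "u > 0"
  shows "std_normal_density z * std_normal_density ((a - t * z) / u)
       = std_normal_density a * std_normal_density ((z - t * a) / u)"
proof -
  have "u\<^sup>2 * (z\<^sup>2 + ((a - t * z) / u)\<^sup>2) = (t\<^sup>2 + u\<^sup>2) * z\<^sup>2 + a\<^sup>2 - 2*a*t*z"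
    using u by (simp add: power_divide field_simps power2_eq_square)
  moreover have "u\<^sup>2 * (a\<^sup>2 + ((z - t * a) / u)\<^sup>2) = (t\<^sup>2 + u\<^sup>2) * a\<^sup>2 + z\<^sup>2 - 2*a*t*z"
    using u by (simp add: power_divide field_simps power2_eq_square)
  ultimately have "u\<^sup>2 * (z\<^sup>2 + ((a - t * z) / u)\<^sup>2) = u\<^sup>2 * (a\<^sup>2 + ((z - t * a) / u)\<^sup>2)"
    unfolding tu by simp
  then have "z\<^sup>2 + ((a - t * z) / u)\<^sup>2 = a\<^sup>2 + ((z - t * a) / u)\<^sup>2"
    using u by simp
  then have "exp (- z\<^sup>2 / 2) * exp (- ((a - t * z) / u)\<^sup>2 / 2)
      = exp (- a\<^sup>2 / 2) * exp (- ((z - t * a) / u)\<^sup>2 / 2)"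
    unfolding exp_add[symmetric] by (simp add: field_simps)
  then show ?thesis
    unfolding normal_density_def by simp
qed

text \<open>Two affine changes of variable, one in each coordinate, with Fubini in between.\<close>
lemma nn_integral_std_normal_rotation:
  fixes H :: "real \<times> real \<Rightarrow> ennreal" and t u :: real
  assumes H[measurable]: "H \<in> borel_measurable borel"
    and tu: "t\<^sup>2 + u\<^sup>2 = 1" and u: "u > 0"
  shows "(\<integral>\<^sup>+z. \<integral>\<^sup>+w. H (t*z+u*w, u*z-t*w) * std_normal_density z * std_normal_density w \<partial>lborel \<partial>lborel)
       = (\<integral>\<^sup>+a. \<integral>\<^sup>+b. H (a, b) * std_normal_density a * std_normal_density b \<partial>lborel \<partial>lborel)"
proof -
  let ?p = std_normal_density
  let ?K = "\<lambda>z a. H (a, (z - t*a)/u) * ?p a * ?p ((z - t*a)/u)"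
  have inner_w: "(\<integral>\<^sup>+w. H (t*z+u*w, u*z-t*w) * ?p z * ?p w \<partial>lborel)
      = ennreal (1/u) * (\<integral>\<^sup>+a. ?K z a \<partial>lborel)" for z
  proof -
    have second: "(z - t*(t*z + u*w))/u = u*z-t*w" for w
    proof -
      have "z - t*(t*z + u*w) - u*(u*z - t*w) = z*(1 - (t\<^sup>2 + u\<^sup>2))"
        by (simp add: power2_eq_square algebra_simps)
      then show ?thesis using tu u by (simp add: field_simps)
    qed
    have "(\<integral>\<^sup>+a. ?K z a \<partial>lborel) = (\<integral>\<^sup>+a. H (a, (z - t*a)/u) * ?p z * ?p ((a - t*z)/u) \<partial>lborel)"
      using std_normal_density_rotation_swap[OF tu u]
      by (intro nn_integral_cong) (simp add: mult.assoc ennreal_mult'[symmetric])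
    also have "\<dots> = ennreal u * (\<integral>\<^sup>+w. H (t*z + u*w, (z - t*(t*z + u*w))/u) * ?p z * ?p ((t*z + u*w - t*z)/u) \<partial>lborel)"
      using u by (subst nn_integral_real_affine[where c=u and t="t*z"]) auto
    also have "\<dots> = ennreal u * (\<integral>\<^sup>+w. H (t*z+u*w, u*z-t*w) * ?p z * ?p w \<partial>lborel)"
      using u by (simp add: second)
    finally show ?thesis using u
      by (simp add: mult.assoc[symmetric] ennreal_mult'[symmetric] divide_simps)
  qed
  have inner_z: "(\<integral>\<^sup>+z. ?K z a \<partial>lborel) = ennreal u * (\<integral>\<^sup>+b. H (a, b) * ?p a * ?p b \<partial>lborel)" for a
    using u by (subst nn_integral_real_affine[where c=u and t="t*a"]) auto
  have "(\<integral>\<^sup>+z. \<integral>\<^sup>+w. H (t*z+u*w, u*z-t*w) * ?p z * ?p w \<partial>lborel \<partial>lborel)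
      = ennreal (1/u) * (\<integral>\<^sup>+z. \<integral>\<^sup>+a. ?K z a \<partial>lborel \<partial>lborel)"
    unfolding inner_w by (rule nn_integral_cmult) measurable
  also have "(\<integral>\<^sup>+z. \<integral>\<^sup>+a. ?K z a \<partial>lborel \<partial>lborel) = (\<integral>\<^sup>+a. \<integral>\<^sup>+z. ?K z a \<partial>lborel \<partial>lborel)"
    by (rule lborel_pair.Fubini') measurable
  also have "\<dots> = ennreal u * (\<integral>\<^sup>+a. \<integral>\<^sup>+b. H (a, b) * ?p a * ?p b \<partial>lborel \<partial>lborel)"
    unfolding inner_z by (rule nn_integral_cmult) measurable
  finally show ?thesis
    using u by (simp add: mult.assoc[symmetric] ennreal_mult'[symmetric])
qed

lemma nn_integral_indep_std_normal:
  fixes M :: "'a measure" and X Z :: "'a \<Rightarrow> real" and h :: "real \<times> real \<Rightarrow> ennreal"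
  assumes M: "prob_space M"
    and ind: "prob_space.indep_var M borel X borel Z"
    and dZ: "distributed M lborel Z (\<lambda>x. ennreal (std_normal_density x))"
    and h[measurable]: "h \<in> borel_measurable (borel \<Otimes>\<^sub>M borel)"
  shows "(\<integral>\<^sup>+\<omega>. h (X \<omega>, Z \<omega>) \<partial>M)
       = (\<integral>\<^sup>+x. \<integral>\<^sup>+z. h (x, z) * std_normal_density z \<partial>lborel \<partial>distr M borel X)"
proof -
  interpret prob_space M by fact
  have rv[measurable]: "random_variable borel X" "random_variable borel Z"
    and joint: "distr M borel X \<Otimes>\<^sub>M distr M borel Z = distr M (borel \<Otimes>\<^sub>M borel) (\<lambda>x. (X x, Z x))"
    using ind unfolding indep_var_distribution_eq by auto
  interpret Z: prob_space "distr M borel Z" by (rule prob_space_distr) (rule rv)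
  have "distr M borel Z = distr M lborel Z" by (rule distr_cong) auto
  then have law_Z: "distr M borel Z = density lborel (\<lambda>x. ennreal (std_normal_density x))"
    using dZ unfolding distributed_def by simp
  have "(\<integral>\<^sup>+\<omega>. h (X \<omega>, Z \<omega>) \<partial>M) = (\<integral>\<^sup>+p. h p \<partial>(distr M borel X \<Otimes>\<^sub>M distr M borel Z))"
    unfolding joint by (subst nn_integral_distr) auto
  also have "\<dots> = (\<integral>\<^sup>+x. \<integral>\<^sup>+z. h (x, z) \<partial>distr M borel Z \<partial>distr M borel X)"
    by (rule Z.nn_integral_fst[symmetric]) simp
  also have "\<dots> = (\<integral>\<^sup>+x. \<integral>\<^sup>+z. h (x, z) * std_normal_density z \<partial>lborel \<partial>distr M borel X)"
    unfolding law_Z by (subst nn_integral_density) (auto simp: mult.commute)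
  finally show ?thesis .
qed

text \<open>Estimator of X from Y = s' X + Z, where Z is standard Gaussian. With an auxiliary
  independent standard Gaussian W, rotating (Y, W) gives t Y + u W = s X + N1 and
  u Y - t W = r X + N2 with independent standard Gaussian N1, N2 (for s = t s', r = u s').
  The estimator applies g to the first (a channel of SNR s^2), corrects it linearly by the
  residual of the second (a channel of SNR r^2), and averages over W.\<close>
definition split_estimator :: "(real \<Rightarrow> real) \<Rightarrow> real \<Rightarrow> real \<Rightarrow> real \<Rightarrow> real \<Rightarrow> real \<Rightarrow> real" where
  "split_estimator g t u r k y =
     (\<integral>w. std_normal_density w * (g (t*y + u*w) + k * (u*y - t*w - r * g (t*y + u*w))) \<partial>lborel)"

lemma borel_measurable_split_estimator[measurable]:
  assumes [measurable]: "g \<in> borel_measurable borel"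
  shows "split_estimator g t u r k \<in> borel_measurable borel"
  unfolding split_estimator_def
  by (rule lborel.borel_measurable_lebesgue_integral) (simp add: split_beta')

lemma split_estimator_error_le:
  fixes g :: "real \<Rightarrow> real"
  assumes [measurable]: "g \<in> borel_measurable borel"
    and tu: "t\<^sup>2 + u\<^sup>2 = 1" "u > 0" and s: "t * s' = s" and r: "u * s' = r"
  shows "(\<integral>\<^sup>+z. ennreal ((x - split_estimator g t u r k (s'*x + z))\<^sup>2) * std_normal_density z \<partial>lborel)
      \<le> ennreal ((1 - k*r)\<^sup>2) * (\<integral>\<^sup>+a. ennreal ((x - g (s*x + a))\<^sup>2) * std_normal_density a \<partial>lborel)
         + ennreal (k\<^sup>2)"
proof -
  let ?p = std_normal_density
  define H where "H q = ennreal (((1 - k*r) * (x - g (s*x + fst q)) - k * snd q)\<^sup>2)" for q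
  have [measurable]: "H \<in> borel_measurable borel"
    unfolding H_def borel_prod[symmetric] by measurable
  have error_rotated: "x - (g (t*(s'*x+z) + u*w) + k * (u*(s'*x+z) - t*w - r * g (t*(s'*x+z) + u*w)))
      = (1 - k*r) * (x - g (s*x + (t*z + u*w))) - k * (u*z - t*w)" for z w
  proof -
    have first: "t*(s'*x+z) + u*w = s*x + (t*z + u*w)" and second: "u*(s'*x+z) = r*x + u*z"
      using s r by (simp_all add: algebra_simps)
    show ?thesis unfolding first second by (simp add: algebra_simps)
  qed
  have "(\<integral>\<^sup>+z. ennreal ((x - split_estimator g t u r k (s'*x+z))\<^sup>2) * ?p z \<partial>lborel)
      \<le> (\<integral>\<^sup>+z. (\<integral>\<^sup>+w. ennreal (((1 - k*r) * (x - g (s*x + (t*z + u*w))) - k * (u*z - t*w))\<^sup>2) * ?p w \<partial>lborel) * ?p z \<partial>lborel)"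
    unfolding split_estimator_def error_rotated[symmetric]
    by (intro nn_integral_mono mult_right_mono square_diff_std_normal_integral_le) auto
  also have "\<dots> = (\<integral>\<^sup>+z. \<integral>\<^sup>+w. H (t*z+u*w, u*z-t*w) * ?p z * ?p w \<partial>lborel \<partial>lborel)"
    unfolding H_def by (subst nn_integral_multc[symmetric]) (auto intro!: nn_integral_cong simp: mult_ac)
  also have "\<dots> = (\<integral>\<^sup>+a. \<integral>\<^sup>+b. H (a, b) * ?p a * ?p b \<partial>lborel \<partial>lborel)"
    by (rule nn_integral_std_normal_rotation) (use tu in auto)
  also have "\<dots> = (\<integral>\<^sup>+a. ?p a * ennreal (((1 - k*r) * (x - g (s*x + a)))\<^sup>2 + k\<^sup>2) \<partial>lborel)"
  proof (rule nn_integral_cong)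
    fix a
    have "(\<integral>\<^sup>+b. H (a, b) * ?p a * ?p b \<partial>lborel)
        = ?p a * (\<integral>\<^sup>+b. ennreal (((1 - k*r) * (x - g (s*x + a)) - k * b)\<^sup>2) * ?p b \<partial>lborel)"
      unfolding H_def by (subst nn_integral_cmult[symmetric]) (auto intro!: nn_integral_cong simp: mult_ac)
    then show "(\<integral>\<^sup>+b. H (a, b) * ?p a * ?p b \<partial>lborel) = ?p a * ennreal (((1 - k*r) * (x - g (s*x + a)))\<^sup>2 + k\<^sup>2)"
      by (simp only: nn_integral_std_normal_affine_square)
  qed
  also have "\<dots> = (\<integral>\<^sup>+a. ennreal ((1 - k*r)\<^sup>2) * (ennreal ((x - g (s*x + a))\<^sup>2) * ?p a) + ennreal (k\<^sup>2) * ?p a \<partial>lborel)"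
    by (intro nn_integral_cong)
      (simp add: power_mult_distrib ennreal_plus[symmetric] ennreal_mult'[symmetric] distrib_left mult_ac
        del: ennreal_plus)
  also have "\<dots> = ennreal ((1 - k*r)\<^sup>2) * (\<integral>\<^sup>+a. ennreal ((x - g (s*x + a))\<^sup>2) * ?p a \<partial>lborel) + ennreal (k\<^sup>2)"
    by (subst nn_integral_add) (auto simp: nn_integral_cmult nn_integral_std_normal_density)
  finally show ?thesis .
qed

context
  fixes M :: "'a measure" and X Z :: "'a \<Rightarrow> real"
  assumes M: "prob_space M"
    and XM[measurable]: "X \<in> borel_measurable M" and ZM[measurable]: "Z \<in> borel_measurable M"
    and ind: "prob_space.indep_var M borel X borel Z"
    and dZ: "distributed M lborel Z (\<lambda>x. ennreal (std_normal_density x))"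
    and X2: "integrable M (\<lambda>\<omega>. (X \<omega>)\<^sup>2)"
begin

lemma mmse_eq_nn_integral_estimator_error:
  obtains g where "g \<in> borel_measurable borel"
    "ennreal (mmse M X Z \<gamma>)
       = (\<integral>\<^sup>+x. \<integral>\<^sup>+z. ennreal ((x - g (sqrt \<gamma> * x + z))\<^sup>2) * std_normal_density z \<partial>lborel \<partial>distr M borel X)"
proof -
  interpret prob_space M by (rule M)
  define Y where "Y \<omega> = sqrt \<gamma> * X \<omega> + Z \<omega>" for \<omega>
  define F where "F = vimage_algebra (space M) Y borel"
  have [measurable]: "Y \<in> borel_measurable M" unfolding Y_def by measurable
  interpret finite_measure_subalgebra M F
    unfolding F_def by (rule finite_measure_subalgebra_vimage_algebra) simp
  obtain g where g[measurable]: "g \<in> borel_measurable borel"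
    and cond_exp_eq: "\<And>\<omega>. \<omega> \<in> space M \<Longrightarrow> real_cond_exp M F X \<omega> = g (Y \<omega>)"
    using borel_measurable_vimage_algebra_factor[of "real_cond_exp M F X" "space M" Y]
    unfolding F_def by auto
  have "ennreal (mmse M X Z \<gamma>) = (\<integral>\<^sup>+\<omega>. ennreal ((X \<omega> - real_cond_exp M F X \<omega>)\<^sup>2) \<partial>M)"
    unfolding mmse_def Let_def Y_def[symmetric] F_def[symmetric]
    using real_cond_exp_square_error_integrable[OF XM X2]
    by (intro nn_integral_eq_integral[symmetric]) (auto intro: measurable_from_subalg[OF subalg])
  also have "\<dots> = (\<integral>\<^sup>+\<omega>. ennreal ((X \<omega> - g (sqrt \<gamma> * X \<omega> + Z \<omega>))\<^sup>2) \<partial>M)"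
    by (intro nn_integral_cong) (simp add: cond_exp_eq Y_def)
  also have "\<dots> = (\<integral>\<^sup>+x. \<integral>\<^sup>+z. ennreal ((x - g (sqrt \<gamma> * x + z))\<^sup>2) * std_normal_density z \<partial>lborel \<partial>distr M borel X)"
    using nn_integral_indep_std_normal[OF M ind dZ, of "\<lambda>(x, z). ennreal ((x - g (sqrt \<gamma> * x + z))\<^sup>2)"]
    by simp
  finally show ?thesis using that g by blast
qed

lemma mmse_le_of_nn_integral_estimator_error:
  assumes [measurable]: "h \<in> borel_measurable borel" and "0 \<le> b"
    and bound: "(\<integral>\<^sup>+x. \<integral>\<^sup>+z. ennreal ((x - h (sqrt \<gamma> * x + z))\<^sup>2) * std_normal_density z \<partial>lborel \<partial>distr M borel X)
                  \<le> ennreal b"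
  shows "mmse M X Z \<gamma> \<le> b"
proof -
  interpret prob_space M by (rule M)
  define Y where "Y \<omega> = sqrt \<gamma> * X \<omega> + Z \<omega>" for \<omega>
  define F where "F = vimage_algebra (space M) Y borel"
  have [measurable]: "Y \<in> borel_measurable M" unfolding Y_def by measurable
  interpret finite_measure_subalgebra M F
    unfolding F_def by (rule finite_measure_subalgebra_vimage_algebra) simp
  have hF[measurable]: "(\<lambda>\<omega>. h (Y \<omega>)) \<in> borel_measurable F"
    unfolding F_def by (intro measurable_compose[OF measurable_vimage_algebra1 assms(1)]) simp
  have nn: "(\<integral>\<^sup>+\<omega>. ennreal ((X \<omega> - h (Y \<omega>))\<^sup>2) \<partial>M) \<le> ennreal b"
    unfolding Y_def
    using nn_integral_indep_std_normal[OF M ind dZ, of "\<lambda>(x, z). ennreal ((x - h (sqrt \<gamma> * x + z))\<^sup>2)"] bound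
    by simp
  then have integrable: "integrable M (\<lambda>\<omega>. (X \<omega> - h (Y \<omega>))\<^sup>2)"
    by (intro integrableI_bounded) (auto simp: le_less_trans)
  then have "ennreal (\<integral>\<omega>. (X \<omega> - h (Y \<omega>))\<^sup>2 \<partial>M) \<le> ennreal b"
    using nn by (subst nn_integral_eq_integral[symmetric]) auto
  with \<open>0 \<le> b\<close> have "(\<integral>\<omega>. (X \<omega> - h (Y \<omega>))\<^sup>2 \<partial>M) \<le> b"
    by (simp add: ennreal_le_iff)
  moreover have "mmse M X Z \<gamma> \<le> (\<integral>\<omega>. (X \<omega> - h (Y \<omega>))\<^sup>2 \<partial>M)"
    unfolding mmse_def Let_def Y_def[symmetric] F_def[symmetric]
    using integrable X2 by (intro real_cond_exp_square_error_le) auto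
  ultimately show ?thesis by linarith
qed

lemma mmse_nonneg: "0 \<le> mmse M X Z \<gamma>"
  unfolding mmse_def Let_def by (simp add: integral_nonneg_AE)

text \<open>The split estimator with the optimal estimator g at SNR gamma and the gain k below
  achieves error m / (1 + delta m) at SNR gamma + delta, where m is the error of g.\<close>
lemma mmse_le_mmse_div:
  assumes "0 \<le> \<gamma>" "\<gamma> < \<gamma>'"
  shows "mmse M X Z \<gamma>' \<le> mmse M X Z \<gamma> / (1 + (\<gamma>' - \<gamma>) * mmse M X Z \<gamma>)"
proof -
  interpret prob_space M by (rule M)
  interpret X: prob_space "distr M borel X" by (rule prob_space_distr) simp
  let ?p = std_normal_density
  define m where "m = mmse M X Z \<gamma>"
  define \<delta> where "\<delta> = \<gamma>' - \<gamma>"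
  define r where "r = sqrt \<delta>"
  define t where "t = sqrt \<gamma> / sqrt \<gamma>'"
  define u where "u = r / sqrt \<gamma>'"
  define k where "k = r * m / (1 + \<delta> * m)"
  have "0 < sqrt \<gamma>'" "0 < \<delta>" "0 \<le> m"
    using assms by (simp_all add: \<delta>_def m_def mmse_nonneg)
  then have pos: "0 < 1 + \<delta> * m" and u: "0 < u" and r2: "r\<^sup>2 = \<delta>"
    by (simp_all add: u_def r_def add_pos_nonneg)
  have tu: "t\<^sup>2 + u\<^sup>2 = 1"
    using assms \<open>0 < sqrt \<gamma>'\<close> by (simp add: t_def u_def r_def \<delta>_def power_divide add_divide_distrib[symmetric])
  have error_eq: "(1 - k*r)\<^sup>2 * m + k\<^sup>2 = m / (1 + \<delta> * m)"
  proof -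
    have gain: "1 - k*r = 1 / (1 + \<delta> * m)"
      unfolding k_def using pos r2 by (simp add: field_simps power2_eq_square)
    have k2: "k\<^sup>2 = \<delta> * m\<^sup>2 / (1 + \<delta> * m)\<^sup>2"
      unfolding k_def by (simp add: power_divide power_mult_distrib r2)
    have "(1 - k*r)\<^sup>2 * m + k\<^sup>2 = m * (1 + \<delta> * m) / (1 + \<delta> * m)\<^sup>2"
      unfolding gain k2 by (simp add: power_divide add_divide_distrib power2_eq_square algebra_simps)
    then show ?thesis
      using pos by (simp add: power2_eq_square)
  qed
  obtain g where [measurable]: "g \<in> borel_measurable borel" and m_eq:
    "ennreal m = (\<integral>\<^sup>+x. \<integral>\<^sup>+z. ennreal ((x - g (sqrt \<gamma> * x + z))\<^sup>2) * ?p z \<partial>lborel \<partial>distr M borel X)"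
    unfolding m_def by (rule mmse_eq_nn_integral_estimator_error)
  have "(\<integral>\<^sup>+x. \<integral>\<^sup>+z. ennreal ((x - split_estimator g t u r k (sqrt \<gamma>' * x + z))\<^sup>2) * ?p z \<partial>lborel \<partial>distr M borel X)
      \<le> (\<integral>\<^sup>+x. ennreal ((1 - k*r)\<^sup>2) * (\<integral>\<^sup>+z. ennreal ((x - g (sqrt \<gamma> * x + z))\<^sup>2) * ?p z \<partial>lborel)
            + ennreal (k\<^sup>2) \<partial>distr M borel X)"
    using tu u \<open>0 < sqrt \<gamma>'\<close>
    by (intro nn_integral_mono split_estimator_error_le) (auto simp: t_def u_def)
  also have "\<dots> = ennreal ((1 - k*r)\<^sup>2) * ennreal m + ennreal (k\<^sup>2) * emeasure (distr M borel X) UNIV"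
    unfolding m_eq by (subst nn_integral_add) (auto simp: nn_integral_cmult)
  also have "\<dots> = ennreal ((1 - k*r)\<^sup>2 * m + k\<^sup>2)"
    using X.emeasure_space_1 \<open>0 \<le> m\<close> by (simp add: ennreal_mult ennreal_plus)
  also have "\<dots> = ennreal (m / (1 + \<delta> * m))"
    by (simp only: error_eq)
  finally have bound: "(\<integral>\<^sup>+x. \<integral>\<^sup>+z. ennreal ((x - split_estimator g t u r k (sqrt \<gamma>' * x + z))\<^sup>2) * ?p z
      \<partial>lborel \<partial>distr M borel X) \<le> ennreal (m / (1 + \<delta> * m))" .
  show ?thesis
    unfolding m_def[symmetric] \<delta>_def[symmetric]
    by (rule mmse_le_of_nn_integral_estimator_error[OF _ _ bound]) (use pos \<open>0 \<le> m\<close> in auto)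
qed

lemma inverse_mmse_increment_ge:
  assumes "0 \<le> \<gamma>" "\<gamma> < \<gamma>'" "0 < mmse M X Z \<gamma>'"
  shows "\<gamma>' - \<gamma> \<le> 1 / mmse M X Z \<gamma>' - 1 / mmse M X Z \<gamma>"
proof -
  define m where "m = mmse M X Z \<gamma>"
  define m' where "m' = mmse M X Z \<gamma>'"
  have "0 \<le> m" unfolding m_def by (rule mmse_nonneg)
  moreover have le: "m' \<le> m / (1 + (\<gamma>' - \<gamma>) * m)"
    unfolding m_def m'_def using assms(1,2) by (rule mmse_le_mmse_div)
  ultimately have "0 < 1 + (\<gamma>' - \<gamma>) * m"
    using assms(2) by (simp add: add_pos_nonneg)
  moreover have "m \<noteq> 0"
    using le assms(3) by (auto simp: m'_def)
  ultimately have pos: "0 < m" "0 < 1 + (\<gamma>' - \<gamma>) * m"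
    using \<open>0 \<le> m\<close> by simp_all
  have "1 / m + (\<gamma>' - \<gamma>) = 1 / (m / (1 + (\<gamma>' - \<gamma>) * m))"
    using pos by (simp add: field_simps)
  also have "\<dots> \<le> 1 / m'"
    using le pos assms(3) by (intro divide_left_mono) (auto simp: m'_def)
  finally show ?thesis unfolding m_def m'_def by simp
qed

end

lemma antimono_on_has_real_derivative_nonpos:
  fixes f :: "real \<Rightarrow> real"
  assumes "antimono_on S f" "x \<in> interior S" "(f has_real_derivative D) (at x)"
  shows "D \<le> 0"
proof -
  obtain e where "0 < e" "ball x e \<subseteq> S"
    using assms(2) by (auto simp: mem_interior)
  have "((\<lambda>y. (f y - f x) / (y - x)) \<longlongrightarrow> D) (at_right x)"
    using assms(3) unfolding has_field_derivative_iff by (rule filterlim_mono) (auto simp: at_le)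
  moreover have "eventually (\<lambda>y. (f y - f x) / (y - x) \<le> 0) (at_right x)"
  proof (rule eventually_at_rightI[of x "x + e"])
    fix y assume "y \<in> {x<..<x + e}"
    then have "x < y" "y \<in> S" "x \<in> S"
      using \<open>ball x e \<subseteq> S\<close> \<open>0 < e\<close> by (auto simp: dist_real_def)
    then have "f y \<le> f x"
      using assms(1) by (auto simp: monotone_on_def)
    then show "(f y - f x) / (y - x) \<le> 0"
      using \<open>x < y\<close> by (simp add: divide_nonpos_pos)
  qed (use \<open>0 < e\<close> in simp)
  ultimately show ?thesis
    by (rule tendsto_upperbound) simp
qed

lemma mono_on_scaled_of_antimono_on_inverse:
  fixes f :: "real \<Rightarrow> real"
  assumes "antimono_on {0<..} f" "0 < l"
  shows "mono_on {0<..} (\<lambda>W. (1 / l) * f (1 / (W * l)))"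
proof (rule monotone_onI)
  fix W1 W2 :: real assume "W1 \<in> {0<..}" "W2 \<in> {0<..}" "W1 \<le> W2"
  then have "0 < 1 / (W2 * l)" "1 / (W2 * l) \<le> 1 / (W1 * l)"
    using assms(2) by (auto intro!: divide_left_mono mult_right_mono)
  moreover have "0 < 1 / (W1 * l)"
    using \<open>W1 \<in> {0<..}\<close> assms(2) by simp
  ultimately have "f (1 / (W1 * l)) \<le> f (1 / (W2 * l))"
    using monotone_onD[OF assms(1)] by simp
  then show "(1 / l) * f (1 / (W1 * l)) \<le> (1 / l) * f (1 / (W2 * l))"
    using assms(2) by (simp add: divide_right_mono)
qed

context
  fixes M :: "'a measure" and X Z :: "'a \<Rightarrow> real"
  assumes bij: "bij_betw (mmse M X Z) {0..} {0<..1}"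
begin

lemma mmse_inv_nonneg: "\<psi> \<in> {0<..1} \<Longrightarrow> 0 \<le> mmse_inv M X Z \<psi>"
  using bij_betw_the_inv_into[OF bij] unfolding mmse_inv_def bij_betw_def by auto

lemma mmse_mmse_inv: "\<psi> \<in> {0<..1} \<Longrightarrow> mmse M X Z (mmse_inv M X Z \<psi>) = \<psi>"
  using f_the_inv_into_f_bij_betw[OF bij] unfolding mmse_inv_def by auto

lemma mmse_pos: "0 \<le> \<gamma> \<Longrightarrow> 0 < mmse M X Z \<gamma>"
  using bij unfolding bij_betw_def by auto

lemma mmse_le_1: "0 \<le> \<gamma> \<Longrightarrow> mmse M X Z \<gamma> \<le> 1"
  using bij unfolding bij_betw_def by auto

context
  assumes strict_anti: "strict_antimono_on {0..} (mmse M X Z)"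
    and increment: "\<And>\<gamma> \<gamma>'. 0 \<le> \<gamma> \<Longrightarrow> \<gamma> < \<gamma>' \<Longrightarrow> \<gamma>' - \<gamma> \<le> 1 / mmse M X Z \<gamma>' - 1 / mmse M X Z \<gamma>"
begin

lemma mercury_G_ge_1:
  assumes "0 < \<psi>" "\<psi> < 1"
  shows "1 \<le> mercury_G M X Z \<psi>"
proof -
  define \<gamma> where "\<gamma> = mmse_inv M X Z \<psi>"
  have "0 \<le> \<gamma>" and \<psi>: "mmse M X Z \<gamma> = \<psi>"
    using assms mmse_inv_nonneg mmse_mmse_inv unfolding \<gamma>_def by auto
  have "\<gamma> \<le> 1 / \<psi> - 1"
  proof (cases "\<gamma> = 0")
    case False
    then have "\<gamma> \<le> 1 / \<psi> - 1 / mmse M X Z 0"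
      using increment[of 0 \<gamma>] \<psi> \<open>0 \<le> \<gamma>\<close> by simp
    moreover have "1 \<le> 1 / mmse M X Z 0"
      using mmse_pos[of 0] mmse_le_1[of 0] by simp
    ultimately show ?thesis by linarith
  qed (use assms in simp)
  then show ?thesis
    using assms by (simp add: mercury_G_def \<gamma>_def)
qed

lemma mercury_G_antimono_on: "antimono_on {0<..} (mercury_G M X Z)"
proof (rule monotone_onI)
  fix \<psi>1 \<psi>2 :: real
  assume "\<psi>1 \<in> {0<..}" "\<psi>2 \<in> {0<..}" "\<psi>1 \<le> \<psi>2"
  show "mercury_G M X Z \<psi>2 \<le> mercury_G M X Z \<psi>1"
  proof (cases "\<psi>2 < 1")
    case True
    define \<gamma>1 where "\<gamma>1 = mmse_inv M X Z \<psi>1"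
    define \<gamma>2 where "\<gamma>2 = mmse_inv M X Z \<psi>2"
    have \<gamma>: "0 \<le> \<gamma>1" "0 \<le> \<gamma>2" "mmse M X Z \<gamma>1 = \<psi>1" "mmse M X Z \<gamma>2 = \<psi>2"
      using True \<open>\<psi>1 \<le> \<psi>2\<close> \<open>\<psi>1 \<in> {0<..}\<close> mmse_inv_nonneg mmse_mmse_inv
      unfolding \<gamma>1_def \<gamma>2_def by auto
    have "\<gamma>2 \<le> \<gamma>1"
    proof (rule ccontr)
      assume "\<not> \<gamma>2 \<le> \<gamma>1"
      then have "\<psi>2 < \<psi>1"
        using strict_anti \<gamma> unfolding monotone_on_def by auto
      with \<open>\<psi>1 \<le> \<psi>2\<close> show False by simp
    qed
    then have "\<gamma>1 - \<gamma>2 \<le> 1 / \<psi>1 - 1 / \<psi>2"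
      using increment[of \<gamma>2 \<gamma>1] \<gamma> by (cases "\<gamma>2 = \<gamma>1") auto
    then show ?thesis
      using True \<open>\<psi>1 \<le> \<psi>2\<close> by (simp add: mercury_G_def \<gamma>1_def \<gamma>2_def)
  next
    case False
    then show ?thesis
      using mercury_G_ge_1[of \<psi>1] \<open>\<psi>1 \<in> {0<..}\<close> by (cases "\<psi>1 < 1") (auto simp: mercury_G_def)
  qed
qed

end

end

theorem lemma3:
  fixes M :: "'a measure" and X Z :: "'a \<Rightarrow> real"
  assumes "prob_space M"
    and "X \<in> borel_measurable M" and "Z \<in> borel_measurable M"
    and "prob_space.indep_var M borel X borel Z"
    and "distributed M lborel Z (\<lambda>x. ennreal (std_normal_density x))"
    and "integrable M (\<lambda>\<omega>. (X \<omega>)\<^sup>2)"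
    and "integral\<^sup>L M X = 0"
    and "integral\<^sup>L M (\<lambda>\<omega>. (X \<omega>)\<^sup>2) = 1"
    \<comment> \<open>standing facts about mmse stated in the context\<close>
    and "continuous_on {0..} (mmse M X Z)"
    and "strict_antimono_on {0..} (mmse M X Z)"
    and "bij_betw (mmse M X Z) {0..} {0<..1}"
  shows "antimono_on {0<..} (mercury_G M X Z)
    \<and> (\<forall>\<psi> D. 0 < \<psi> \<and> \<psi> < 1 \<and> (mercury_G M X Z has_real_derivative D) (at \<psi>) \<longrightarrow> D \<le> 0)
    \<and> (\<forall>\<psi>\<ge>1. mercury_G M X Z \<psi> = 1)
    \<and> (\<forall>l>0. mono_on {0<..} (\<lambda>W. (1 / l) * mercury_G M X Z (1 / (W * l))))"
proof -
  have anti: "antimono_on {0<..} (mercury_G M X Z)"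
  proof (rule mercury_G_antimono_on)
    show "\<gamma>' - \<gamma> \<le> 1 / mmse M X Z \<gamma>' - 1 / mmse M X Z \<gamma>" if "0 \<le> \<gamma>" "\<gamma> < \<gamma>'" for \<gamma> \<gamma>'
      using inverse_mmse_increment_ge[OF assms(1-6) that] mmse_pos[OF assms(11), of \<gamma>'] that by simp
  qed (fact assms)+
  then have "D \<le> 0" if "0 < \<psi>" "(mercury_G M X Z has_real_derivative D) (at \<psi>)" for \<psi> D
    using that by (intro antimono_on_has_real_derivative_nonpos[OF anti]) (simp_all add: interior_open)
  moreover have "mercury_G M X Z \<psi> = 1" if "1 \<le> \<psi>" for \<psi>
    using that by (simp add: mercury_G_def)
  ultimately show ?thesis
    using anti mono_on_scaled_of_antimono_on_inverse[OF anti] by blast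
qed

end
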